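(* Consider a Behavioral Security Game on an attack graph in which the attack success probability on each edge is $p_{i,j}(x_{i,j})=e^{-x_{i,j}}$, and let $B=\sum_{D_k\in\mathcal{D}}B_k$ be the sum of the budgets of all defenders. Then for any attack graph and any profile of behavioral levels $\{\alpha_k\}$ with $\alpha_k\in(0,1]$, the Price of Behavioral Anarchy satisfies $PoBA\le\exp(B)$.
   Context: An attack graph is a finite directed graph $G=(V,\mathcal{E})$ with source node $v_s$; $\mathcal{P}_m$ is the set of directed paths from $v_s$ to $v_m$ (as sets of edges); assets are reachable from $v_s$. Each defender $D_k\in\mathcal{D}$ owns assets $V_k\subseteq V\setminus\{v_s\}$ with losses $L_m\ge0$, has budget $B_k\ge0$ and strategy set $X_k=\{x_k\in\mathbb{R}^{|\mathcal{E}|}_{\ge0}:\mathbf{1}^Tx_k\le B_k\}$; the total investment on edge $(v_i,v_j)$ is $x_{i,j}=\sum_k x^k_{i,j}$. Defender $D_k$'s perceived cost is $C_k(x_k,\mathbf{x}_{-k})=\sum_{v_m\in V_k}L_m\max_{P\in\mathcal{P}_m}\prod_{(v_i,v_j)\in P}w_k(p_{i,j}(x_{i,j}))$ with Prelec weighting $w_k(p)=\exp[-(-\log p)^{\alpha_k}]$, and her true expected cost $\hat C_k$ is the same expression with $w_k$ replaced by the identity. Let $\hat C(\mathbf{x})=\sum_{D_k}\hat C_k(\mathbf{x})$. Let $X^{NE}$ be the set of pure Nash equilibria, i.e., profiles $\bar{\mathbf{x}}$ with $\bar x_k\in\arg\min_{x\in X_k}C_k(x,\bar{\mathbf{x}}_{-k})$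 for all $D_k$. Let $X^{Soc}=\{\mathbf{x}\in\mathbb{R}^{|\mathcal{D}||\mathcal{E}|}_{\ge0}:\mathbf{1}^T\mathbf{x}\le\sum_kB_k\}$ and $\mathbf{x}^*\in\arg\min_{\mathbf{x}\in X^{Soc}}\hat C(\mathbf{x})$. The Price of Behavioral Anarchy is $PoBA=\sup_{\bar{\mathbf{x}}\in X^{NE}}\hat C(\bar{\mathbf{x}})/\hat C(\mathbf{x}^* )$. *)

theory Defs
  imports "HOL-Analysis.Analysis"
begin

type_synonym 'v edge = "'v \<times> 'v"

definition paths :: "'v edge set \<Rightarrow> 'v \<Rightarrow> 'v \<Rightarrow> 'v edge set set" where
  "paths E s t = { set (zip us (tl us)) | us. us \<noteq> [] \<and> hd us = s \<and> last us = t
                     \<and> distinct us \<and> set (zip us (tl us)) \<subseteq> E }"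

definition prelec :: "real \<Rightarrow> real \<Rightarrow> real" where
  "prelec \<alpha> p = exp (- ((- ln p) powr \<alpha>))"

definition succ_prob :: "real \<Rightarrow> real" where
  "succ_prob t = exp (- t)"

definition strategy :: "'v edge set \<Rightarrow> real \<Rightarrow> ('v edge \<Rightarrow> real) \<Rightarrow> bool" where
  "strategy E Bk y \<longleftrightarrow> (\<forall>e. 0 \<le> y e) \<and> (\<forall>e. e \<notin> E \<longrightarrow> y e = 0) \<and> sum y E \<le> Bk"

definition total_inv :: "'d set \<Rightarrow> ('d \<Rightarrow> 'v edge \<Rightarrow> real) \<Rightarrow> 'v edge \<Rightarrow> real" where
  "total_inv D x e = (\<Sum>k\<in>D. x k e)"

definition defender_cost ::
  "(real \<Rightarrow> real) \<Rightarrow> 'v edge set \<Rightarrow> 'v \<Rightarrow> 'v set \<Rightarrow> ('v \<Rightarrow> real) \<Rightarrow> ('v edge \<Rightarrow> real) \<Rightarrow> real" where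
  "defender_cost w E s Vk L X =
     (\<Sum>m\<in>Vk. L m * Max ((\<lambda>P. \<Prod>e\<in>P. w (succ_prob (X e))) ` paths E s m))"

definition perceived_cost ::
  "'v edge set \<Rightarrow> 'v \<Rightarrow> 'd set \<Rightarrow> ('d \<Rightarrow> 'v set) \<Rightarrow> ('v \<Rightarrow> real) \<Rightarrow> ('d \<Rightarrow> real)
    \<Rightarrow> 'd \<Rightarrow> ('d \<Rightarrow> 'v edge \<Rightarrow> real) \<Rightarrow> real" where
  "perceived_cost E s D V L \<alpha> k x = defender_cost (prelec (\<alpha> k)) E s (V k) L (total_inv D x)"

definition true_cost ::
  "'v edge set \<Rightarrow> 'v \<Rightarrow> 'd set \<Rightarrow> ('d \<Rightarrow> 'v set) \<Rightarrow> ('v \<Rightarrow> real)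
    \<Rightarrow> 'd \<Rightarrow> ('d \<Rightarrow> 'v edge \<Rightarrow> real) \<Rightarrow> real" where
  "true_cost E s D V L k x = defender_cost (\<lambda>p. p) E s (V k) L (total_inv D x)"

definition social_cost ::
  "'v edge set \<Rightarrow> 'v \<Rightarrow> 'd set \<Rightarrow> ('d \<Rightarrow> 'v set) \<Rightarrow> ('v \<Rightarrow> real) \<Rightarrow> ('d \<Rightarrow> 'v edge \<Rightarrow> real) \<Rightarrow> real" where
  "social_cost E s D V L x = (\<Sum>k\<in>D. true_cost E s D V L k x)"

definition is_NE ::
  "'v edge set \<Rightarrow> 'v \<Rightarrow> 'd set \<Rightarrow> ('d \<Rightarrow> 'v set) \<Rightarrow> ('v \<Rightarrow> real) \<Rightarrow> ('d \<Rightarrow> real) \<Rightarrow> ('d \<Rightarrow> real)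
    \<Rightarrow> ('d \<Rightarrow> 'v edge \<Rightarrow> real) \<Rightarrow> bool" where
  "is_NE E s D V L B \<alpha> x \<longleftrightarrow>
     (\<forall>k\<in>D. strategy E (B k) (x k) \<and>
        (\<forall>y. strategy E (B k) y \<longrightarrow>
              perceived_cost E s D V L \<alpha> k x \<le> perceived_cost E s D V L \<alpha> k (x(k := y))))"

definition soc_feasible ::
  "'v edge set \<Rightarrow> 'd set \<Rightarrow> ('d \<Rightarrow> real) \<Rightarrow> ('d \<Rightarrow> 'v edge \<Rightarrow> real) \<Rightarrow> bool" where
  "soc_feasible E D B x \<longleftrightarrow>
     (\<forall>k\<in>D. \<forall>e. 0 \<le> x k e \<and> (e \<notin> E \<longrightarrow> x k e = 0)) \<and>
     (\<Sum>k\<in>D. \<Sum>e\<in>E. x k e) \<le> (\<Sum>k\<in>D. B k)"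

definition is_soc_opt ::
  "'v edge set \<Rightarrow> 'v \<Rightarrow> 'd set \<Rightarrow> ('d \<Rightarrow> 'v set) \<Rightarrow> ('v \<Rightarrow> real) \<Rightarrow> ('d \<Rightarrow> real)
    \<Rightarrow> ('d \<Rightarrow> 'v edge \<Rightarrow> real) \<Rightarrow> bool" where
  "is_soc_opt E s D V L B x \<longleftrightarrow> soc_feasible E D B x \<and>
     (\<forall>y. soc_feasible E D B y \<longrightarrow> social_cost E s D V L x \<le> social_cost E s D V L y)"

end

theory Submission
  imports Defs
begin

text \<open>With success probabilities e^{-x}, a path whose edges carry total investment t is attacked
  successfully with true probability e^{-t}. Every such probability is at most 1, so any profile
  (in particular every equilibrium) has true social cost at most the total loss \<Sum> L. Conversely,
  under a profile whose total investment is at most B every path keeps probability at least e^{-B},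
  so even the social optimum costs at least e^{-B} \<Sum> L. Dividing gives PoBA \<le> e^B; neither the
  equilibrium conditions nor the behavioral levels matter.\<close>

lemma paths_subset: "P \<in> paths E s t \<Longrightarrow> P \<subseteq> E"
  unfolding paths_def by auto

lemma finite_paths: "finite E \<Longrightarrow> finite (paths E s t)"
  using paths_subset by (metis Pow_iff finite_Pow_iff finite_subset subsetI)

lemma prod_succ_prob: "finite P \<Longrightarrow> (\<Prod>e\<in>P. succ_prob (X e)) = exp (- sum X P)"
  unfolding succ_prob_def by (simp add: exp_sum[symmetric] sum_negf)

lemma true_defender_cost_le_sum_losses:
  assumes "finite E" and "\<forall>e. 0 \<le> X e"
    and "\<forall>m\<in>Vk. 0 \<le> L m \<and> paths E s m \<noteq> {}"
  shows "defender_cost (\<lambda>p. p) E s Vk L X \<le> sum L Vk"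
  unfolding defender_cost_def
proof (rule sum_mono)
  fix m assume m: "m \<in> Vk"
  have "Max ((\<lambda>P. \<Prod>e\<in>P. succ_prob (X e)) ` paths E s m) \<le> 1"
  proof (rule Max.boundedI)
    show "finite ((\<lambda>P. \<Prod>e\<in>P. succ_prob (X e)) ` paths E s m)"
      using finite_paths[OF assms(1)] by simp
    show "(\<lambda>P. \<Prod>e\<in>P. succ_prob (X e)) ` paths E s m \<noteq> {}"
      using assms(3) m by simp
  next
    fix a assume "a \<in> (\<lambda>P. \<Prod>e\<in>P. succ_prob (X e)) ` paths E s m"
    then obtain P where "a = (\<Prod>e\<in>P. succ_prob (X e))" by auto
    then show "a \<le> 1"
      using assms(2) by (auto intro: prod_le_1 simp: succ_prob_def)
  qed
  then show "L m * Max ((\<lambda>P. \<Prod>e\<in>P. succ_prob (X e)) ` paths E s m) \<le> L m"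
    using assms(3) m by (metis mult_left_mono mult.right_neutral)
qed

lemma true_defender_cost_ge_sum_losses:
  assumes "finite E" and "\<forall>e. 0 \<le> X e"
    and "\<forall>m\<in>Vk. 0 \<le> L m \<and> paths E s m \<noteq> {}"
  shows "exp (- sum X E) * sum L Vk \<le> defender_cost (\<lambda>p. p) E s Vk L X"
  unfolding defender_cost_def sum_distrib_left
proof (rule sum_mono)
  fix m assume m: "m \<in> Vk"
  obtain P where P: "P \<in> paths E s m"
    using assms(3) m by auto
  have "P \<subseteq> E" using paths_subset[OF P] .
  then have "sum X P \<le> sum X E"
    using assms(1,2) by (intro sum_mono2) auto
  then have "exp (- sum X E) \<le> exp (- sum X P)" by simp
  also have "\<dots> = (\<Prod>e\<in>P. succ_prob (X e))"
    using \<open>P \<subseteq> E\<close> assms(1) by (simp add: prod_succ_prob finite_subset)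
  also have "\<dots> \<le> Max ((\<lambda>P. \<Prod>e\<in>P. succ_prob (X e)) ` paths E s m)"
    using finite_paths[OF assms(1)] P by (intro Max_ge) auto
  finally show "exp (- sum X E) * L m
      \<le> L m * Max ((\<lambda>P. \<Prod>e\<in>P. succ_prob (X e)) ` paths E s m)"
    using assms(3) m by (simp add: mult.commute mult_left_mono)
qed

lemma social_cost_le_total_loss:
  assumes "finite E" and "\<forall>k\<in>D. \<forall>m\<in>V k. 0 \<le> L m \<and> paths E s m \<noteq> {}"
    and "\<forall>e. 0 \<le> total_inv D x e"
  shows "social_cost E s D V L x \<le> (\<Sum>k\<in>D. sum L (V k))"
  unfolding social_cost_def true_cost_def
  using assms by (intro sum_mono true_defender_cost_le_sum_losses) auto

lemma soc_feasible_total_inv_nonneg: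
  "soc_feasible E D B x \<Longrightarrow> 0 \<le> total_inv D x e"
  unfolding soc_feasible_def total_inv_def by (cases e) (auto intro!: sum_nonneg)

lemma soc_feasible_total_inv_le_budget:
  assumes "soc_feasible E D B x"
  shows "sum (total_inv D x) E \<le> (\<Sum>k\<in>D. B k)"
proof -
  have "sum (total_inv D x) E = (\<Sum>k\<in>D. \<Sum>e\<in>E. x k e)"
    unfolding total_inv_def by (rule sum.swap)
  then show ?thesis
    using assms unfolding soc_feasible_def by simp
qed

lemma social_cost_ge_total_loss:
  assumes "finite E" and "\<forall>k\<in>D. \<forall>m\<in>V k. 0 \<le> L m \<and> paths E s m \<noteq> {}"
    and "soc_feasible E D B x"
  shows "exp (- (\<Sum>k\<in>D. B k)) * (\<Sum>k\<in>D. sum L (V k)) \<le> social_cost E s D V L x"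
  unfolding social_cost_def true_cost_def sum_distrib_left[of _ "\<lambda>k. sum L (V k)"]
proof (rule sum_mono)
  fix k assume k: "k \<in> D"
  have "exp (- (\<Sum>k\<in>D. B k)) \<le> exp (- sum (total_inv D x) E)"
    using soc_feasible_total_inv_le_budget[OF assms(3)] by simp
  moreover have "0 \<le> sum L (V k)"
    using assms(2) k by (simp add: sum_nonneg)
  ultimately have "exp (- (\<Sum>k\<in>D. B k)) * sum L (V k)
      \<le> exp (- sum (total_inv D x) E) * sum L (V k)"
    by (rule mult_right_mono)
  also have "\<dots> \<le> defender_cost (\<lambda>p. p) E s (V k) L (total_inv D x)"
    using assms k soc_feasible_total_inv_nonneg
    by (intro true_defender_cost_ge_sum_losses) auto
  finally show "exp (- (\<Sum>k\<in>D. B k)) * sum L (V k)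
      \<le> defender_cost (\<lambda>p. p) E s (V k) L (total_inv D x)" .
qed

theorem proposition5:
  fixes Vs :: "'v set" and E :: "'v edge set" and s :: 'v
    and D :: "'d set" and V :: "'d \<Rightarrow> 'v set" and L :: "'v \<Rightarrow> real"
    and B :: "'d \<Rightarrow> real" and \<alpha> :: "'d \<Rightarrow> real"
    and xNE xopt :: "'d \<Rightarrow> 'v edge \<Rightarrow> real"
  assumes "finite Vs" and "E \<subseteq> Vs \<times> Vs" and "s \<in> Vs"
    and "finite D"
    and "\<forall>k\<in>D. V k \<subseteq> Vs - {s}"
    and "\<forall>k\<in>D. \<forall>m\<in>V k. 0 \<le> L m \<and> paths E s m \<noteq> {}"
    and "\<forall>k\<in>D. 0 \<le> B k"
    and "\<forall>k\<in>D. 0 < \<alpha> k \<and> \<alpha> k \<le> 1"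
    and "is_NE E s D V L B \<alpha> xNE"
    and "is_soc_opt E s D V L B xopt"
  shows "social_cost E s D V L xNE \<le> exp (\<Sum>k\<in>D. B k) * social_cost E s D V L xopt"
proof -
  let ?loss = "\<Sum>k\<in>D. sum L (V k)" and ?budget = "\<Sum>k\<in>D. B k"
  have "finite E"
    using assms(1,2) by (meson finite_SigmaI finite_subset)
  have "\<forall>e. 0 \<le> total_inv D xNE e"
    using assms(9) unfolding is_NE_def strategy_def total_inv_def by (simp add: sum_nonneg)
  then have "social_cost E s D V L xNE \<le> ?loss"
    by (rule social_cost_le_total_loss[OF \<open>finite E\<close> assms(6)])
  also have "\<dots> = exp ?budget * (exp (- ?budget) * ?loss)"
    by (simp add: exp_minus)
  also have "\<dots> \<le> exp ?budget * social_cost E s D V L xopt"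
    using assms(10) \<open>finite E\<close> assms(6) unfolding is_soc_opt_def
    by (simp add: social_cost_ge_total_loss)
  finally show ?thesis .
qed

end
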